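(* Let $N=\{p\in(\mathbf{R}^3)^4: p_4=0,\ \|p\|=1\}$ (the space of tetrahedra $p=(p_1,p_2,p_3,p_4)$ modulo translation and positive scaling) and let $Y$ be the vector field on $N$ given by $Y_p=D(\pi)_p(\nabla\operatorname{vol}_p)$, where $\operatorname{vol}(p)=\frac16((p_2-p_1)\times(p_3-p_1))\cdot(p_4-p_1)$. If $p\in N$ is a singularity of $Y$ (i.e. $Y_p=0$) and $p_1,p_2,p_3,p_4$ are not collinear, then $p$ is a regular tetrahedron, i.e. all six distances $\|p_i-p_j\|$, $i\neq j$, are equal.
   Context: $\tau(p_1,\ldots,p_4)=(p_1-p_4,p_2-p_4,p_3-p_4,0)$, $\sigma(p)=p/\|p\|$, $\pi=\sigma\circ\tau$, defined on $(\mathbf{R}^3)^4$ minus the configurations with all $p_i$ equal; $D(\pi)$ is its differential and $\nabla$ is the Euclidean gradient on $\mathbf{R}^{12}$. *)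

theory Defs
  imports "HOL-Analysis.Analysis"
begin

text \<open>Tetrahedra p = (p1,p2,p3,p4) are elements of real^3^4 (index type 4 with
  elements 1,2,3,4, where 4 = 0 in the numeral type). The norm on real^3^4 is the
  Euclidean norm of R^12.\<close>

definition tvol :: "real^3^4 \<Rightarrow> real" where
  "tvol p = (1/6) * (cross3 (p$2 - p$1) (p$3 - p$1) \<bullet> (p$4 - p$1))"

definition ttau :: "real^3^4 \<Rightarrow> real^3^4" where
  "ttau p = (\<chi> i. if i = 4 then 0 else p$i - p$4)"

definition tsigma :: "real^3^4 \<Rightarrow> real^3^4" where
  "tsigma p = p /\<^sub>R norm p"

definition tpi :: "real^3^4 \<Rightarrow> real^3^4" where
  "tpi = tsigma \<circ> ttau"

definition tN :: "(real^3^4) set" where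
  "tN = {p. p$4 = 0 \<and> norm p = 1}"

definition regular_tetrahedron :: "real^3^4 \<Rightarrow> bool" where
  "regular_tetrahedron p \<longleftrightarrow>
     (\<forall>i j k l. i \<noteq> j \<longrightarrow> k \<noteq> l \<longrightarrow> dist (p$i) (p$j) = dist (p$k) (p$l))"

end

theory Submission
  imports Defs
begin

text \<open>The gradient g of vol at p has entries g_i normal to the face opposite p_i, and
  they sum to zero since vol is translation invariant. On N the differential of \<pi> is
  h \<mapsto> \<tau>h - (p \<bullet> \<tau>h) p, so Y_p = 0 means \<tau>g = c p, and together with the vanishing sum
  g_i = c (p_i - m) for the centroid m. If c = 0 the gradient vanishes, every face is
  degenerate and the vertices are collinear. Otherwise each p_i - m is orthogonal to the
  opposite face, so (p_i - m) \<bullet> (p_j - m) is the same number a for all i \<noteq> j;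
  as the p_i - m sum to zero, |p_i - m|^2 = -3a for all i, and every edge has squared
  length -8a.\<close>

unbundle cross3_syntax

lemma has_derivative_normalize:
  fixes q :: "'a::real_inner"
  assumes "norm q = 1"
  shows "((\<lambda>x. x /\<^sub>R norm x) has_derivative (\<lambda>h. h - (q \<bullet> h) *\<^sub>R q)) (at q)"
proof -
  have "q \<noteq> 0"
    using assms by auto
  then have "((\<lambda>x. inverse (norm x)) has_derivative (\<lambda>h. - (h \<bullet> q))) (at q)"
    using Deriv.has_derivative_inverse[OF _ has_derivative_norm, of q] assms by (simp add: sgn_div_norm)
  from has_derivative_scaleR[OF this has_derivative_ident] show ?thesis
    using assms by (simp add: inner_commute)
qed

lemma collinear_if_cross_products_eq_0:
  fixes a b c d :: "real^3"
  assumes "(b - a) \<times> (c - a) = 0" "(c - a) \<times> (d - a) = 0" "(d - a) \<times> (b - a) = 0"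
  shows "collinear {a, b, c, d}"
proof (cases "a = b")
  case True
  have "collinear {c, a, d}"
    using assms(2) by (simp add: collinear_3 cross_eq_0)
  with True show ?thesis
    by (simp add: insert_commute)
next
  case False
  have "collinear {b, a, c}" "collinear {d, a, b}"
    using assms(1,3) by (simp_all add: collinear_3 cross_eq_0)
  with False show ?thesis
    by (simp add: collinear_4_3 insert_commute)
qed

definition centroid :: "'a::real_vector^'n \<Rightarrow> 'a" where
  "centroid x = (\<Sum>i\<in>UNIV. x$i) /\<^sub>R real CARD('n)"

lemma dist_eq_if_altitudes_through_centroid:
  fixes x :: "'a::real_inner^'n"
  assumes orth: "\<And>i j k. i \<noteq> j \<Longrightarrow> i \<noteq> k \<Longrightarrow> (x$i - centroid x) \<bullet> (x$j - x$k) = 0"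
    and "i \<noteq> j" "k \<noteq> l"
  shows "dist (x$i) (x$j) = dist (x$k) (x$l)"
proof -
  define q where "q i = x$i - centroid x" for i
  have sum_q: "(\<Sum>i\<in>UNIV. q i) = 0"
    by (simp add: q_def sum_subtractf centroid_def sum_constant_scaleR)
  have q_orth: "q i \<bullet> q j = q i \<bullet> q k" if "i \<noteq> j" "i \<noteq> k" for i j k
    using orth[OF that] by (simp add: q_def inner_diff_right)
  have off_diag: "q i \<bullet> q j = q k \<bullet> q l" if "i \<noteq> j" "k \<noteq> l" for i j k l
  proof (cases "i = k")
    case True
    with that show ?thesis
      using q_orth[of i j l] by simp
  next
    case False
    with that have "q i \<bullet> q j = q i \<bullet> q k"
      by (intro q_orth)
    also have "\<dots> = q k \<bullet> q i"
      by (rule inner_commute)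
    also have "\<dots> = q k \<bullet> q l"
      using False that by (intro q_orth) auto
    finally show ?thesis .
  qed
  have diag: "q i \<bullet> q i = - (real CARD('n) - 1) * (q i \<bullet> q j)" if "i \<noteq> j" for i j
  proof -
    have "0 = q i \<bullet> (\<Sum>k\<in>UNIV. q k)"
      by (simp add: sum_q)
    also have "\<dots> = q i \<bullet> q i + (\<Sum>k\<in>UNIV - {i}. q i \<bullet> q k)"
      by (simp add: sum.remove[of UNIV i] inner_add_right inner_sum_right)
    also have "(\<Sum>k\<in>UNIV - {i}. q i \<bullet> q k) = (\<Sum>k\<in>UNIV - {i}. q i \<bullet> q j)"
      using that by (intro sum.cong) (auto intro: q_orth)
    also have "\<dots> = (real CARD('n) - 1) * (q i \<bullet> q j)"
      by (simp add: of_nat_diff Suc_leI)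
    finally show ?thesis
      by linarith
  qed
  have dist_sq: "(dist (x$i) (x$j))\<^sup>2 = - 2 * real CARD('n) * (q i \<bullet> q j)" if "i \<noteq> j" for i j
  proof -
    have "(dist (x$i) (x$j))\<^sup>2 = q i \<bullet> q i + q j \<bullet> q j - 2 * (q i \<bullet> q j)"
      by (simp add: q_def dist_norm power2_norm_eq_inner inner_diff_left inner_diff_right inner_commute)
    moreover have "q j \<bullet> q j = - (real CARD('n) - 1) * (q i \<bullet> q j)"
      using diag[of j i] that by (simp add: inner_commute)
    ultimately show ?thesis
      using diag[OF that] by (simp add: algebra_simps)
  qed
  have "(dist (x$i) (x$j))\<^sup>2 = (dist (x$k) (x$l))\<^sup>2"
    using dist_sq[OF assms(2)] dist_sq[OF assms(3)] off_diag[OF assms(2,3)] by simp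
  then show ?thesis
    by (simp add: power2_eq_imp_eq)
qed

text \<open>Entry 1 is also -(p_3 - p_2) \<times> (p_4 - p_2) / 6; writing it as minus the other three
  entries makes translation invariance (the entries sum to zero) immediate.\<close>

definition tvol_gradient :: "real^3^4 \<Rightarrow> real^3^4" where
  "tvol_gradient p =
     (let a = p$2 - p$1; b = p$3 - p$1; c = p$4 - p$1
      in (\<chi> i. if i = 2 then b \<times> c else if i = 3 then c \<times> a else if i = 4 then a \<times> b
               else - (b \<times> c + c \<times> a + a \<times> b)) /\<^sub>R 6)"

lemma tvol_gradient_nth:
  "tvol_gradient p $ 1 =
     - ((p$3 - p$1) \<times> (p$4 - p$1) + (p$4 - p$1) \<times> (p$2 - p$1) + (p$2 - p$1) \<times> (p$3 - p$1))
       /\<^sub>R 6"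
  "tvol_gradient p $ 2 = ((p$3 - p$1) \<times> (p$4 - p$1)) /\<^sub>R 6"
  "tvol_gradient p $ 3 = ((p$4 - p$1) \<times> (p$2 - p$1)) /\<^sub>R 6"
  "tvol_gradient p $ 4 = ((p$2 - p$1) \<times> (p$3 - p$1)) /\<^sub>R 6"
  by (simp_all add: tvol_gradient_def Let_def)

lemma tvol_has_derivative: "(tvol has_derivative (\<lambda>h. tvol_gradient p \<bullet> h)) (at p)"
proof -
  let ?a = "p$2 - p$1" and ?b = "p$3 - p$1" and ?c = "p$4 - p$1"
  have diff: "\<And>i j. ((\<lambda>q::real^3^4. q$i - q$j) has_derivative (\<lambda>h. h$i - h$j)) (at p)"
    by (intro derivative_intros bounded_linear_imp_has_derivative bounded_linear_vec_nth)
  have cross: "((\<lambda>q. (q$2 - q$1) \<times> (q$3 - q$1)) has_derivative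
      (\<lambda>h. ?a \<times> (h$3 - h$1) + (h$2 - h$1) \<times> ?b)) (at p)"
    using bilinear_cross bilinear_conv_bounded_bilinear bounded_bilinear.FDERIV[OF _ diff diff]
    by fastforce
  have "(tvol has_derivative (\<lambda>h. (1/6) * (?a \<times> ?b \<bullet> (h$4 - h$1)
      + (?a \<times> (h$3 - h$1) + (h$2 - h$1) \<times> ?b) \<bullet> ?c))) (at p)"
    unfolding tvol_def[abs_def]
    using bounded_bilinear.FDERIV[OF bounded_bilinear_inner cross diff]
    by (intro has_derivative_mult_right) simp
  moreover have "(1/6) * (?a \<times> ?b \<bullet> (h$4 - h$1) + (?a \<times> (h$3 - h$1) + (h$2 - h$1) \<times> ?b) \<bullet> ?c)
      = tvol_gradient p \<bullet> h" for h
    by (simp add: sum_4 tvol_gradient_nth cross3_simps)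
  ultimately show ?thesis
    by simp
qed

lemma sum_tvol_gradient: "(\<Sum>i\<in>UNIV. tvol_gradient p $ i) = 0"
  by (simp add: sum_4 tvol_gradient_nth algebra_simps)

lemma tvol_gradient_orthogonal_face:
  assumes "i \<noteq> j" "i \<noteq> k"
  shows "tvol_gradient p $ i \<bullet> (p$j - p$k) = 0"
  using assms exhaust_4[of i] exhaust_4[of j] exhaust_4[of k]
  by (auto simp: tvol_gradient_nth cross3_simps)

lemma collinear_if_tvol_gradient_eq_0:
  assumes "tvol_gradient p = 0"
  shows "collinear {p$1, p$2, p$3, p$4}"
proof (rule collinear_if_cross_products_eq_0)
  show "(p$2 - p$1) \<times> (p$3 - p$1) = 0" "(p$3 - p$1) \<times> (p$4 - p$1) = 0"
    "(p$4 - p$1) \<times> (p$2 - p$1) = 0"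
    using assms by (simp_all add: vec_eq_iff forall_4 tvol_gradient_nth)
qed

lemma bounded_linear_ttau: "bounded_linear ttau"
  unfolding ttau_def by (rule bounded_linearI') (auto simp: vec_eq_iff algebra_simps)

lemma tpi_has_derivative:
  assumes "p \<in> tN"
  shows "(tpi has_derivative (\<lambda>h. ttau h - (p \<bullet> ttau h) *\<^sub>R p)) (at p)"
proof -
  have "ttau p = p" "norm p = 1"
    using assms by (auto simp: tN_def ttau_def vec_eq_iff forall_4)
  then have "(tsigma has_derivative (\<lambda>h. h - (p \<bullet> h) *\<^sub>R p)) (at (ttau p))"
    unfolding tsigma_def[abs_def] by (simp add: has_derivative_normalize)
  from diff_chain_at[OF bounded_linear_imp_has_derivative[OF bounded_linear_ttau] this]
  show ?thesis
    by (simp add: tpi_def o_def)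
qed

lemma eq_scaled_centred_if_ttau_eq:
  fixes g p :: "real^3^4"
  assumes "(\<Sum>i\<in>UNIV. g$i) = 0" "p$4 = 0" "ttau g = c *\<^sub>R p"
  shows "g$i = c *\<^sub>R (p$i - centroid p)"
proof -
  have shift: "g$j = g$4 + c *\<^sub>R p$j" for j
    using arg_cong[OF assms(3), of "\<lambda>v. v$j"] assms(2)
    by (cases "j = 4") (auto simp: ttau_def algebra_simps)
  have "0 = (\<Sum>j\<in>UNIV. g$j)"
    using assms(1) ..
  also have "\<dots> = (\<Sum>j\<in>UNIV. g$4 + c *\<^sub>R p$j)"
    by (intro sum.cong refl shift)
  also have "\<dots> = real CARD(4) *\<^sub>R g$4 + c *\<^sub>R (\<Sum>j\<in>UNIV. p$j)"
    by (simp only: sum.distrib sum_constant_scaleR scaleR_sum_right)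
  finally have "(1/4) *\<^sub>R (4 *\<^sub>R g$4 + c *\<^sub>R (\<Sum>j\<in>UNIV. p$j)) = 0"
    by simp
  then have "g$4 = - c *\<^sub>R centroid p"
    by (simp add: centroid_def algebra_simps eq_neg_iff_add_eq_0)
  with shift[of i] show ?thesis
    by (simp add: algebra_simps)
qed

theorem mainTheorem6:
  fixes p g :: "real^3^4" and D\<pi> :: "real^3^4 \<Rightarrow> real^3^4"
  assumes "p \<in> tN"
    and "(tvol has_derivative (\<lambda>h. g \<bullet> h)) (at p)"
    and "(tpi has_derivative D\<pi>) (at p)"
    and "D\<pi> g = 0"
    and "\<not> collinear {p$1, p$2, p$3, p$4}"
  shows "regular_tetrahedron p"
proof -
  have g: "g = tvol_gradient p"
    using has_derivative_unique[OF assms(2) tvol_has_derivative] by (metis vector_eq_rdot)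
  have "D\<pi> = (\<lambda>h. ttau h - (p \<bullet> ttau h) *\<^sub>R p)"
    using has_derivative_unique[OF assms(3) tpi_has_derivative[OF assms(1)]] .
  with assms(4) have "ttau g = (p \<bullet> ttau g) *\<^sub>R p"
    by simp
  then obtain c where "ttau g = c *\<^sub>R p"
    by blast
  then have centred: "tvol_gradient p $ i = c *\<^sub>R (p$i - centroid p)" for i
    using eq_scaled_centred_if_ttau_eq[of g p] sum_tvol_gradient assms(1) by (simp add: g tN_def)
  have "c \<noteq> 0"
    using centred collinear_if_tvol_gradient_eq_0 assms(5) by (force simp: vec_eq_iff)
  with centred have "(p$i - centroid p) \<bullet> (p$j - p$k) = 0" if "i \<noteq> j" "i \<noteq> k" for i j k
    using tvol_gradient_orthogonal_face[OF that, of p] by simp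
  then show ?thesis
    unfolding regular_tetrahedron_def by (blast intro: dist_eq_if_altitudes_through_centroid)
qed

end
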